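(* Let $(X,d_X)$ be a metric space with density character $\kappa$. Suppose there are $C\in[1,\infty)$ and $D\in[0,\infty)$ such that $\Delta_X^{(c)}(R)\leq CR+D$ for all $R\in[0,\infty)$. Then for any $\lambda>0$, any $K>2(C+\lambda)$, and any $L>\frac{(C+\lambda)D}{\lambda}$, there exists a coarse Lipschitz embedding $f\colon X\to c_0^+(\kappa)$ such that \[d_X(x,y)-L\leq \|f(x)-f(y)\|_{\infty}\leq K\,d_X(x,y)\] for every $x,y\in X$. If $D=0$, then it is possible to take $L=0$.
   Context: The density character $\mathrm{dens}(X)$ is the smallest cardinality of a dense subset of $X$. For a cardinal $\kappa$, $c_0(\kappa)$ is the space of real families $(x_\xi)_{\xi<\kappa}$ such that $\{\xi : |x_\xi|>\eta\}$ is finite for every $\eta>0$, with the sup norm, and $c_0^+(\kappa)=\{x\in c_0(\kappa): x_\xi\geq 0 \text{ for all }\xi\}$ with the metric inherited from $c_0(\kappa)$. For a family $\mathcal{U}$ of subsets covering $X$: $\mathrm{diam}(\mathcal{U})=\sup\{\mathrm{diam}(U): U\in\mathcal{U}\}$; the Lebesgue number is $\mathcal{L}(\mathcal{U})=\sup\{d\in[0,\infty): \text{every } E\subseteq X \text{ with } \mathrm{diam}(E)<d \text{ is contained in some } U\in\mathcal{U}\}$; $\mathcal{U}$ is point-finite if each $x\in X$ lies in only finitely many $U\in\mathcal{U}$. Define $\Delta_X^{(c)}\colon[0,\infty)\to[0,\infty]$ by $\Delta_X^{(c)}(R)=\inf\{\mathrm{diam}(\mathcal{U}): \mathcal{U}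 \text{ a point-finite cover of } X \text{ with } \mathcal{L}(\mathcal{U})\geq R\}$. For $f\colon X\to Y$ between metric spaces, $\omega_f(t)=\sup\{d_Y(f(x_1),f(x_2)): d_X(x_1,x_2)\leq t\}$ and $\rho_f(t)=\inf\{d_Y(f(x_1),f(x_2)): d_X(x_1,x_2)\geq t\}$; $f$ is a coarse Lipschitz embedding if there exist $A\geq 1$, $B\geq 0$ with $\omega_f(t)\leq At+B$ and $\rho_f(t)\geq \frac1A t-B$ for all $t\geq 0$. *)

theory Defs
  imports "HOL-Analysis.Analysis" "HOL-Library.Extended_Real" "HOL-Library.Extended_Nonnegative_Real"
begin

definition has_density_card :: "'a::metric_space set \<Rightarrow> 'i set \<Rightarrow> bool" where
  "has_density_card X I \<longleftrightarrow>
     (\<exists>S. S \<subseteq> X \<and> X \<subseteq> closure S \<and> ordIso2 (card_of S) (card_of I)) \<and>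
     (\<forall>S. S \<subseteq> X \<and> X \<subseteq> closure S \<longrightarrow> ordLeq2 (card_of I) (card_of S))"

definition c0 :: "('i \<Rightarrow> real) set" where
  "c0 = {x. \<forall>\<eta>>0. finite {i. \<bar>x i\<bar> > \<eta>}}"

definition c0plus :: "('i \<Rightarrow> real) set" where
  "c0plus = {x \<in> c0. \<forall>i. x i \<ge> 0}"

definition sup_dist :: "('i \<Rightarrow> real) \<Rightarrow> ('i \<Rightarrow> real) \<Rightarrow> real" where
  "sup_dist x y = (SUP i. \<bar>x i - y i\<bar>)"

definition ediam :: "'a::metric_space set \<Rightarrow> ennreal" where
  "ediam E = (SUP p \<in> E \<times> E. ennreal (dist (fst p) (snd p)))"

definition cover_diam :: "'a::metric_space set set \<Rightarrow> ennreal" where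
  "cover_diam \<U> = (SUP U \<in> \<U>. ediam U)"

definition lebesgue_number :: "'a::metric_space set \<Rightarrow> 'a set set \<Rightarrow> ennreal" where
  "lebesgue_number X \<U> = (SUP d \<in> {d::real. 0 \<le> d \<and>
       (\<forall>E. E \<subseteq> X \<and> ediam E < ennreal d \<longrightarrow> (\<exists>U\<in>\<U>. E \<subseteq> U))}. ennreal d)"

definition point_finite_cover :: "'a set \<Rightarrow> 'a set set \<Rightarrow> bool" where
  "point_finite_cover X \<U> \<longleftrightarrow> X \<subseteq> \<Union>\<U> \<and> (\<forall>x\<in>X. finite {U\<in>\<U>. x \<in> U})"

definition Delta_c :: "'a::metric_space set \<Rightarrow> real \<Rightarrow> ennreal" where
  "Delta_c X R = (INF \<U> \<in> {\<U>. point_finite_cover X \<U> \<and> lebesgue_number X \<U> \<ge> ennreal R}.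
                    cover_diam \<U>)"

definition omega_f :: "('a::metric_space \<Rightarrow> 'b) \<Rightarrow> ('b \<Rightarrow> 'b \<Rightarrow> real) \<Rightarrow> real \<Rightarrow> ereal" where
  "omega_f f dY t = (SUP p \<in> {p. dist (fst p) (snd p) \<le> t}. ereal (dY (f (fst p)) (f (snd p))))"

definition rho_f :: "('a::metric_space \<Rightarrow> 'b) \<Rightarrow> ('b \<Rightarrow> 'b \<Rightarrow> real) \<Rightarrow> real \<Rightarrow> ereal" where
  "rho_f f dY t = (INF p \<in> {p. dist (fst p) (snd p) \<ge> t}. ereal (dY (f (fst p)) (f (snd p))))"

definition coarse_lipschitz_embedding :: "('a::metric_space \<Rightarrow> 'b) \<Rightarrow> ('b \<Rightarrow> 'b \<Rightarrow> real) \<Rightarrow> bool" where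
  "coarse_lipschitz_embedding f dY \<longleftrightarrow>
     (\<exists>A B. A \<ge> 1 \<and> B \<ge> 0 \<and>
        (\<forall>t\<ge>0. omega_f f dY t \<le> ereal (A * t + B) \<and> rho_f f dY t \<ge> ereal (t / A - B)))"

end

theory Submission
  imports Defs
begin

(* Fix M with C < M < K/2 and a ratio q > 1 with 2qM < K. For every integer n the bound on
   Delta_X^(c) gives a point-finite cover U_n with Lebesgue number at least q^n and mesh less
   than M q^n + D. A set U in U_n yields the K-Lipschitz coordinate
     K min(q^n, d(., X - U), (d(., x0) - c q^n)^+).
   Given x, y with t = d(x,y) > D and d(x,x0) >= t/2, pick n with q^n <= (t - D)/M < q^(n+1):
   the set of U_n containing the ball of radius qMq^n/K about a point of a dense set S close
   to x misses y, while its coordinate at x is at least t - D. At a fixed point only finitely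
   many scales have coordinates above a given eta > 0 (q^n > eta/K and c q^n < d(., x0)), and
   point-finiteness bounds the sets per scale, so the map lands in c_0^+(kappa). Using one such
   set per point of S and scale, the coordinates are indexed by Z x S, which injects into kappa
   when S is infinite; a finite X embeds isometrically by x |-> (d(x,s))_s. The additive
   error D is at most the L of the statement. *)

lemma finite_powr_between:
  fixes q a b :: real
  assumes "1 < q" "0 < a"
  shows "finite {n::int. a < q powr of_int n \<and> q powr of_int n < b}"
proof (rule finite_subset)
  show "{n::int. a < q powr of_int n \<and> q powr of_int n < b} \<subseteq> {\<lfloor>log q a\<rfloor>..\<lceil>log q b\<rceil>}"
  proof clarify
    fix n :: int assume n: "a < q powr of_int n" "q powr of_int n < b"
    have "log q a < log q (q powr of_int n)"
      using assms n by (intro log_less) auto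
    moreover have "log q (q powr of_int n) < log q b"
      using assms n by (intro log_less) auto
    ultimately have "log q a < n" "n < log q b"
      using assms by auto
    then show "n \<in> {\<lfloor>log q a\<rfloor>..\<lceil>log q b\<rceil>}"
      by (auto simp: floor_le_iff le_ceiling_iff)
  qed
qed simp

lemma powr_scale_between:
  fixes q a :: real
  assumes "1 < q" "0 < a"
  obtains n :: int where "q powr of_int n \<le> a" "a < q * q powr of_int n"
proof
  let ?n = "\<lfloor>log q a\<rfloor>"
  have "q powr of_int ?n \<le> q powr log q a"
    using assms by (intro powr_mono) auto
  then show "q powr of_int ?n \<le> a"
    using assms by simp
  have "a = q powr log q a" using assms by simp
  also have "\<dots> < q powr (of_int ?n + 1)"
    using assms by (intro powr_less_mono) linarith+
  finally show "a < q * q powr of_int ?n"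
    using assms by (simp add: powr_add mult.commute)
qed

lemma abs_min_diff_le: "\<bar>min a b - min c d\<bar> \<le> max \<bar>a - c\<bar> \<bar>b - (d::real)\<bar>"
  by (auto simp: min_def max_def)

lemma infdist_compl_ge:
  assumes "ball s r \<subseteq> U" "U \<noteq> UNIV"
  shows "r - dist s x \<le> infdist x (- U)"
proof -
  have ne: "- U \<noteq> {}" using assms(2) by auto
  show ?thesis unfolding infdist_notempty[OF ne]
  proof (rule cINF_greatest[OF ne])
    fix w assume "w \<in> - U"
    then have "r \<le> dist s w" using assms(1) by (force simp: subset_iff not_le)
    then show "r - dist s x \<le> dist x w"
      using dist_triangle[of s w x] by (simp add: dist_commute)
  qed
qed

definition c0plus_embedding :: "real \<Rightarrow> real \<Rightarrow> ('a::metric_space \<Rightarrow> 'i \<Rightarrow> real) \<Rightarrow> bool" where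
  "c0plus_embedding K L f \<longleftrightarrow> (\<forall>x. f x \<in> c0plus) \<and>
     (\<forall>x y. dist x y - L \<le> sup_dist (f x) (f y) \<and> sup_dist (f x) (f y) \<le> K * dist x y)"

lemma sup_dist_le:
  assumes "\<And>i. \<bar>u i - v i\<bar> \<le> B"
  shows "sup_dist u v \<le> B"
  unfolding sup_dist_def by (rule cSUP_least) (use assms in auto)

lemma abs_le_sup_dist:
  assumes "\<And>i. \<bar>u i - v i\<bar> \<le> B"
  shows "\<bar>u i - v i\<bar> \<le> sup_dist u v"
  unfolding sup_dist_def by (rule cSUP_upper) (use assms in \<open>auto intro!: bdd_aboveI2\<close>)

lemma c0plus_embedding_mono:
  assumes f: "c0plus_embedding K L f" and "K \<le> K'" "L \<le> L'"
  shows "c0plus_embedding K' L' f"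
proof -
  have "K * dist x y \<le> K' * dist x y" for x y :: 'a
    using \<open>K \<le> K'\<close> by (simp add: mult_right_mono)
  with f \<open>L \<le> L'\<close> show ?thesis
    unfolding c0plus_embedding_def by (meson diff_left_mono order_trans)
qed

lemma coarse_lipschitz_embeddingI:
  fixes f :: "'a::metric_space \<Rightarrow> 'b"
  assumes K: "1 \<le> K" and L: "0 \<le> L"
    and bounds: "\<And>x y. dist x y - L \<le> dY (f x) (f y) \<and> dY (f x) (f y) \<le> K * dist x y"
  shows "coarse_lipschitz_embedding f dY"
proof -
  have "omega_f f dY t \<le> ereal (K * t + L)" for t
    unfolding omega_f_def
  proof (rule SUP_least, clarify)
    fix x y :: 'a assume "dist (fst (x, y)) (snd (x, y)) \<le> t"
    then have "K * dist x y \<le> K * t" using K by (simp add: mult_left_mono)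
    then show "ereal (dY (f (fst (x, y))) (f (snd (x, y)))) \<le> ereal (K * t + L)"
      using bounds[of x y] L by simp
  qed
  moreover have "ereal (t / K - L) \<le> rho_f f dY t" if "0 \<le> t" for t
    unfolding rho_f_def
  proof (rule INF_greatest, clarify)
    fix x y :: 'a assume "t \<le> dist (fst (x, y)) (snd (x, y))"
    moreover have "t / K \<le> t" using K \<open>0 \<le> t\<close> by (simp add: divide_le_eq mult_le_cancel_left1)
    ultimately show "ereal (t / K - L) \<le> ereal (dY (f (fst (x, y))) (f (snd (x, y))))"
      using bounds[of x y] by simp
  qed
  ultimately show ?thesis
    using K L unfolding coarse_lipschitz_embedding_def by blast
qed

section \<open>Covers with large Lebesgue number and small mesh\<close>

lemma point_finite_cover_with_small_diam:
  fixes C D M R :: real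
  assumes Delta: "\<forall>R\<ge>0. Delta_c X R \<le> ennreal (C * R + D)"
    and "0 \<le> C" "C < M" "0 \<le> D" "0 < R"
  shows "\<exists>\<U>. point_finite_cover X \<U> \<and> ennreal R \<le> lebesgue_number X \<U> \<and>
             cover_diam \<U> < ennreal (M * R + D)"
proof -
  have "ennreal (C * R + D) < ennreal (M * R + D)"
    using assms by (intro ennreal_lessI) (auto intro: add_pos_nonneg mult_strict_right_mono)
  with Delta \<open>0 < R\<close> have "Delta_c X R < ennreal (M * R + D)"
    by (meson le_less_trans less_imp_le)
  then show ?thesis unfolding Delta_c_def INF_less_iff by auto
qed

lemma ediam_ball_le:
  assumes "0 \<le> r"
  shows "ediam (ball s r) \<le> ennreal (2 * r)"
  unfolding ediam_def
proof (rule SUP_least, clarify)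
  fix x y assume "x \<in> ball s r" "y \<in> ball s r"
  then have "dist x y \<le> 2 * r"
    using dist_triangle[of x y s] by (simp add: dist_commute)
  then show "ennreal (dist (fst (x, y)) (snd (x, y))) \<le> ennreal (2 * r)"
    by (simp add: ennreal_leI)
qed

lemma ball_subset_cover_member:
  assumes Leb: "ennreal R \<le> lebesgue_number UNIV \<U>" and "0 \<le> r" "2 * r < R"
  shows "\<exists>U\<in>\<U>. ball s r \<subseteq> U"
proof -
  have "ennreal (2 * r) < lebesgue_number UNIV \<U>"
    using assms by (meson ennreal_lessI less_le_trans mult_nonneg_nonneg zero_le_numeral
        le_less_trans)
  then obtain d where d: "\<forall>E. ediam E < ennreal d \<longrightarrow> (\<exists>U\<in>\<U>. E \<subseteq> U)"
    and "ennreal (2 * r) < ennreal d"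
    unfolding lebesgue_number_def less_SUP_iff by auto
  with ediam_ball_le[OF \<open>0 \<le> r\<close>, of s] show ?thesis
    by (meson le_less_trans)
qed

lemma dist_less_of_cover_diam:
  assumes "cover_diam \<U> < ennreal T" "U \<in> \<U>" "x \<in> U" "y \<in> U"
  shows "dist x y < T"
proof -
  have "ennreal (dist x y) \<le> ediam U"
    unfolding ediam_def by (rule SUP_upper2[of "(x, y)"]) (use assms in auto)
  also have "\<dots> \<le> cover_diam \<U>"
    unfolding cover_diam_def by (rule SUP_upper) (rule assms)
  finally have "ennreal (dist x y) < ennreal T"
    using assms(1) by (rule le_less_trans)
  then show ?thesis
    by (simp add: ennreal_less_iff)
qed

lemma c0plus_embedding_of_coordinates:
  fixes G :: "'a::metric_space \<Rightarrow> 'j \<Rightarrow> real" and e :: "'j \<Rightarrow> 'i"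
  assumes inj: "inj_on e T"
    and support: "\<And>z j. G z j \<noteq> 0 \<Longrightarrow> j \<in> T"
    and nonneg: "\<And>z j. 0 \<le> G z j"
    and lipschitz: "\<And>x y j. \<bar>G x j - G y j\<bar> \<le> K * dist x y"
    and finite_large: "\<And>z \<eta>. 0 < \<eta> \<Longrightarrow> finite {j. \<eta> < G z j}"
    and separating: "\<And>x y. L < dist x y \<Longrightarrow> \<exists>j. dist x y - L \<le> \<bar>G x j - G y j\<bar>"
  shows "\<exists>f :: 'a \<Rightarrow> 'i \<Rightarrow> real. c0plus_embedding K L f"
proof
  define f where "f x i = (if i \<in> e ` T then G x (inv_into T e i) else 0)" for x i
  have coord: "f x (e j) = G x j" if "j \<in> T" for x j
    using that inj by (simp add: f_def)
  have bound: "\<bar>f x i - f y i\<bar> \<le> K * dist x y" for x y i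
  proof -
    have "0 \<le> K * dist x y" using order_trans[OF abs_ge_zero lipschitz] .
    then show ?thesis using lipschitz by (simp add: f_def)
  qed
  have component_le: "\<bar>f x i - f y i\<bar> \<le> sup_dist (f x) (f y)" for x y i
    by (rule abs_le_sup_dist) (rule bound)
  have "f x \<in> c0plus" for x
    unfolding c0plus_def c0_def
  proof (intro CollectI conjI allI impI)
    fix \<eta> :: real assume "0 < \<eta>"
    have "{i. \<eta> < \<bar>f x i\<bar>} \<subseteq> e ` {j. \<eta> < G x j}"
    proof clarify
      fix i assume "\<eta> < \<bar>f x i\<bar>"
      with \<open>0 < \<eta>\<close> nonneg have "i \<in> e ` T" "\<eta> < G x (inv_into T e i)"
        by (auto simp: f_def split: if_splits)
      then show "i \<in> e ` {j. \<eta> < G x j}"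
        by (metis (mono_tags) f_inv_into_f image_eqI mem_Collect_eq)
    qed
    then show "finite {i. \<eta> < \<bar>f x i\<bar>}"
      by (rule finite_surj[OF finite_large[OF \<open>0 < \<eta>\<close>]])
  qed (simp add: f_def nonneg)
  moreover have "dist x y - L \<le> sup_dist (f x) (f y)" for x y
  proof (cases "L < dist x y")
    case True
    then obtain j where j: "dist x y - L \<le> \<bar>G x j - G y j\<bar>"
      using separating by blast
    with True have "G x j \<noteq> G y j" by auto
    then have "j \<in> T" using support by metis
    with j show ?thesis
      using component_le[of x "e j" y] coord by simp
  next
    case False
    then show ?thesis
      using component_le[of x undefined y] by linarith
  qed
  moreover have "sup_dist (f x) (f y) \<le> K * dist x y" for x y
    by (rule sup_dist_le) (rule bound)
  ultimately show "c0plus_embedding K L f"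
    unfolding c0plus_embedding_def by blast
qed

lemma c0plus_embedding_finite_space:
  fixes g :: "'i \<Rightarrow> 'a::metric_space"
  assumes "finite (UNIV :: 'i set)" "surj g"
  shows "c0plus_embedding 1 0 (\<lambda>x i. dist x (g i))"
proof -
  have bound: "\<bar>dist x (g i) - dist y (g i)\<bar> \<le> dist x y" for x y i
    using abs_dist_diff_le[of x "g i" y] by (simp add: dist_commute)
  have "dist x y \<le> sup_dist (\<lambda>i. dist x (g i)) (\<lambda>i. dist y (g i))" for x y
  proof -
    have "\<bar>dist x (g (inv g y)) - dist y (g (inv g y))\<bar>
        \<le> sup_dist (\<lambda>i. dist x (g i)) (\<lambda>i. dist y (g i))"
      by (rule abs_le_sup_dist) (rule bound)
    then show ?thesis using surj_f_inv_f[OF assms(2)] by simp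
  qed
  moreover have "sup_dist (\<lambda>i. dist x (g i)) (\<lambda>i. dist y (g i)) \<le> dist x y" for x y
    by (rule sup_dist_le) (rule bound)
  ultimately show ?thesis
    unfolding c0plus_embedding_def c0plus_def c0_def
    using finite_subset[OF subset_UNIV assms(1)] by auto
qed

lemma inj_int_times_into:
  assumes "infinite S" "ordIso2 (card_of S) (card_of I)"
  obtains e :: "int \<times> 'a \<Rightarrow> 'i" where "inj_on e (UNIV \<times> S)" "e ` (UNIV \<times> S) \<subseteq> I"
proof -
  have "ordLeq2 (card_of (UNIV :: int set)) (card_of (UNIV :: nat set))"
    using card_of_ordLeq[of "UNIV :: int set" "UNIV :: nat set"] inj_to_nat by blast
  moreover have "ordLeq2 (card_of (UNIV :: nat set)) (card_of S)"
    using assms(1) infinite_iff_card_of_nat by blast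
  ultimately have "ordLeq2 (card_of (UNIV :: int set)) (card_of S)"
    by (rule ordLeq_transitive)
  then have "ordIso2 (card_of ((UNIV :: int set) \<times> S)) (card_of S)"
    by (rule card_of_Times_infinite_simps(3)[OF assms(1) UNIV_not_empty])
  then have "ordLeq2 (card_of ((UNIV :: int set) \<times> S)) (card_of I)"
    using assms(2) ordIso_iff_ordLeq ordIso_transitive by blast
  then show ?thesis
    using that unfolding card_of_ordLeq[symmetric] by blast
qed

section \<open>Coordinates from covers at all scales\<close>

locale multiscale_covers =
  fixes S :: "'a::metric_space set" and Cov :: "int \<Rightarrow> 'a set set"
    and q M D K c :: real and x0 :: 'a
  assumes dense: "closure S = UNIV"
    and q_gt_1: "1 < q" and M_pos: "0 < M" and D_nonneg: "0 \<le> D"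
    and K_gt: "2 * q * M < K"
    and c_pos: "0 < c" and c_le: "c \<le> M * (1/2 - 1/K)"
    and point_finite: "point_finite_cover UNIV (Cov n)"
    and lebesgue: "ennreal (q powr of_int n) \<le> lebesgue_number UNIV (Cov n)"
    and mesh: "cover_diam (Cov n) < ennreal (M * q powr of_int n + D)"
begin

definition scale :: "int \<Rightarrow> real" where
  "scale n = q powr of_int n"

definition radius :: "int \<Rightarrow> real" where
  "radius n = q * M * scale n / K"

lemma K_pos: "0 < K"
proof -
  have "0 < q * M" using q_gt_1 M_pos by simp
  with K_gt show ?thesis by linarith
qed

lemma scale_pos: "0 < scale n"
  using q_gt_1 by (simp add: scale_def)

lemma radius_pos: "0 < radius n"
  using q_gt_1 M_pos K_pos scale_pos by (simp add: radius_def)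

lemma two_radius_less_scale: "2 * radius n < scale n"
  using K_gt K_pos scale_pos by (simp add: radius_def field_simps)

lemma K_mult_radius: "K * radius n = q * M * scale n"
  using K_pos by (simp add: radius_def)

definition nbhd :: "int \<Rightarrow> 'a \<Rightarrow> 'a set" where
  "nbhd n s = (SOME U. U \<in> Cov n \<and> ball s (radius n) \<subseteq> U)"

lemma nbhd: "nbhd n s \<in> Cov n" "ball s (radius n) \<subseteq> nbhd n s"
proof -
  have "\<exists>U. U \<in> Cov n \<and> ball s (radius n) \<subseteq> U"
    using ball_subset_cover_member[OF lebesgue[folded scale_def]
        less_imp_le[OF radius_pos] two_radius_less_scale] by blast
  from someI_ex[OF this] show "nbhd n s \<in> Cov n" "ball s (radius n) \<subseteq> nbhd n s"
    unfolding nbhd_def by auto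
qed

definition bump :: "int \<Rightarrow> 'a set \<Rightarrow> 'a \<Rightarrow> real" where
  "bump n U z = K * min (min (scale n) (infdist z (- U))) (max 0 (dist z x0 - c * scale n))"

lemma bump_nonneg: "0 \<le> bump n U z"
  unfolding bump_def using K_pos scale_pos[of n] infdist_nonneg[of z "- U"]
  by (intro mult_nonneg_nonneg) auto

lemma bump_le: "bump n U z \<le> K * scale n"
  unfolding bump_def using K_pos by (intro mult_left_mono) auto

lemma bump_lipschitz: "\<bar>bump n U x - bump n U y\<bar> \<le> K * dist x y"
proof -
  have "\<bar>min (scale n) (infdist x (- U)) - min (scale n) (infdist y (- U))\<bar> \<le> dist x y"
    using abs_min_diff_le[of "scale n" "infdist x (- U)" "scale n" "infdist y (- U)"]
      infdist_triangle_abs[of x "- U" y] by simp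
  moreover have "\<bar>max 0 (dist x x0 - c * scale n) - max 0 (dist y x0 - c * scale n)\<bar> \<le> dist x y"
    using abs_dist_diff_le[of x x0 y] by (auto simp: dist_commute max_def)
  ultimately have "\<bar>min (min (scale n) (infdist x (- U))) (max 0 (dist x x0 - c * scale n))
      - min (min (scale n) (infdist y (- U))) (max 0 (dist y x0 - c * scale n))\<bar> \<le> dist x y"
    by (meson abs_min_diff_le max.boundedI order_trans)
  then show ?thesis
    using K_pos by (simp add: bump_def flip: right_diff_distrib abs_of_pos) (simp add: abs_mult)
qed

lemma bump_eq_0_outside: "z \<notin> U \<Longrightarrow> bump n U z = 0"
  using scale_pos by (simp add: bump_def)

lemma bump_pos_imp:
  assumes "0 < bump n U z"
  shows "z \<in> U" "c * scale n < dist z x0"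
proof -
  show "z \<in> U" using assms bump_eq_0_outside by fastforce
  show "c * scale n < dist z x0"
  proof (rule ccontr)
    assume "\<not> c * scale n < dist z x0"
    then have "bump n U z = 0"
      using scale_pos[of n] infdist_nonneg[of z "- U"] by (simp add: bump_def)
    with assms show False by simp
  qed
qed

lemma bump_ge:
  assumes "ball s (radius n) \<subseteq> U" "U \<noteq> UNIV"
    and "b \<le> K * (radius n - dist s z)" "b \<le> K * (dist z x0 - c * scale n)"
  shows "b \<le> bump n U z"
proof -
  have "b / K \<le> radius n - dist s z" "b / K \<le> dist z x0 - c * scale n"
    using assms(3,4) K_pos by (simp_all add: divide_le_eq mult.commute)
  moreover have "radius n - dist s z \<le> infdist z (- U)"
    by (rule infdist_compl_ge[OF assms(1,2)])
  moreover have "radius n - dist s z \<le> scale n"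
    using two_radius_less_scale[of n] radius_pos[of n] zero_le_dist[of s z] by linarith
  ultimately have "b / K \<le> min (min (scale n) (infdist z (- U))) (max 0 (dist z x0 - c * scale n))"
    by auto
  then show ?thesis
    unfolding bump_def using K_pos by (metis pos_divide_le_eq mult.commute)
qed

text \<open>An index (n, s) is active only if s is the representative inv_into S (nbhd n) of its
  set nbhd n s. Distinct active indices at one scale therefore carry distinct members of the
  point-finite cover Cov n, which makes every coord z small outside a finite set.\<close>

definition coord :: "'a \<Rightarrow> int \<times> 'a \<Rightarrow> real" where
  "coord z = (\<lambda>(n, s). if s \<in> S \<and> inv_into S (nbhd n) (nbhd n s) = s then bump n (nbhd n s) z else 0)"

lemma coord_eq:
  "coord z (n, s) = (if s \<in> S \<and> inv_into S (nbhd n) (nbhd n s) = s then bump n (nbhd n s) z else 0)"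
  by (simp add: coord_def)

lemma coord_nonneg: "0 \<le> coord z j"
  using bump_nonneg by (cases j) (simp add: coord_eq)

lemma coord_support: "coord z j \<noteq> 0 \<Longrightarrow> j \<in> UNIV \<times> S"
  by (cases j) (auto simp: coord_eq split: if_splits)

lemma coord_lipschitz: "\<bar>coord x j - coord y j\<bar> \<le> K * dist x y"
  using bump_lipschitz K_pos by (cases j) (simp add: coord_eq)

lemma coord_finite:
  assumes "0 < \<eta>"
  shows "finite {j. \<eta> < coord z j}"
proof (rule finite_subset)
  define N where "N = {n. \<eta> / K < scale n \<and> scale n < dist z x0 / c}"
  show "{j. \<eta> < coord z j} \<subseteq> (\<Union>n\<in>N. (\<lambda>U. (n, inv_into S (nbhd n) U)) ` {U \<in> Cov n. z \<in> U})"
  proof clarify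
    fix n s assume "\<eta> < coord z (n, s)"
    then have s: "s \<in> S" "inv_into S (nbhd n) (nbhd n s) = s" and b: "\<eta> < bump n (nbhd n s) z"
      using assms by (auto simp: coord_eq split: if_splits)
    from b assms have "0 < bump n (nbhd n s) z" by linarith
    then have "z \<in> nbhd n s" "c * scale n < dist z x0"
      by (rule bump_pos_imp)+
    moreover have "\<eta> / K < scale n"
      using b bump_le[of n "nbhd n s" z] K_pos by (simp add: divide_less_eq mult.commute)
    ultimately have "n \<in> N"
      using c_pos unfolding N_def by (simp add: less_divide_eq mult.commute)
    then show "(n, s) \<in> (\<Union>n\<in>N. (\<lambda>U. (n, inv_into S (nbhd n) U)) ` {U \<in> Cov n. z \<in> U})"
      using nbhd(1)[of n s] \<open>z \<in> nbhd n s\<close> s(2)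
      by (intro UN_I[of n] image_eqI[of _ _ "nbhd n s"]) auto
  qed
  have "finite N"
    unfolding N_def scale_def using finite_powr_between[OF q_gt_1] assms K_pos by simp
  then show "finite (\<Union>n\<in>N. (\<lambda>U. (n, inv_into S (nbhd n) U)) ` {U \<in> Cov n. z \<in> U})"
    using point_finite by (auto simp: point_finite_cover_def)
qed

lemma coord_representative:
  assumes "s \<in> S"
  obtains s' where "\<And>z. coord z (n, s') = bump n (nbhd n s) z"
proof
  define s' where "s' = inv_into S (nbhd n) (nbhd n s)"
  have "nbhd n s \<in> nbhd n ` S" using assms by simp
  then have "s' \<in> S" "nbhd n s' = nbhd n s"
    unfolding s'_def by (rule inv_into_into, rule f_inv_into_f)
  then show "coord z (n, s') = bump n (nbhd n s) z" for z
    by (simp add: coord_eq s'_def)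
qed

lemma coord_separates_from_far_point:
  assumes "D < dist x y" "dist x y \<le> 2 * dist x x0"
  shows "\<exists>j. dist x y - D \<le> coord x j - coord y j"
proof -
  define t where "t = dist x y"
  have "0 < (t - D) / M" using assms(1) M_pos by (simp add: t_def)
  then obtain n where n: "scale n \<le> (t - D) / M" "(t - D) / M < q * scale n"
    using powr_scale_between[OF q_gt_1] unfolding scale_def by blast
  have "t - D < K * radius n"
    using n(2) M_pos unfolding K_mult_radius by (simp add: divide_less_eq mult_ac)
  then have "0 < radius n - (t - D) / K"
    using K_pos by (simp add: divide_less_eq mult.commute)
  then obtain s where "s \<in> S" and s: "dist s x < radius n - (t - D) / K"
    using dense closure_approachable[of x S] by blast
  define U where "U = nbhd n s"
  obtain s' where coord_s': "\<And>z. coord z (n, s') = bump n U z"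
    using coord_representative[OF \<open>s \<in> S\<close>] unfolding U_def by blast
  have U: "ball s (radius n) \<subseteq> U" "U \<in> Cov n" using nbhd by (auto simp: U_def)
  have "0 < (t - D) / K" using assms(1) K_pos by (simp add: t_def)
  with s U(1) have "x \<in> U" by auto
  have "y \<notin> U"
  proof
    assume "y \<in> U"
    with U(2) \<open>x \<in> U\<close> have "t < M * scale n + D"
      using dist_less_of_cover_diam[OF mesh[folded scale_def]] by (simp add: t_def)
    moreover have "M * scale n \<le> t - D"
      using n(1) M_pos by (simp add: le_divide_eq mult.commute)
    ultimately show False by simp
  qed
  have "c * scale n \<le> M * (1/2 - 1/K) * ((t - D) / M)"
    using c_le c_pos n(1) scale_pos[of n] by (intro mult_mono) auto
  also have "\<dots> = (t - D) / 2 - (t - D) / K"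
    using M_pos by (simp add: field_simps)
  moreover have "(t - D) / 2 \<le> dist x x0"
    using assms(2) D_nonneg by (simp add: t_def)
  ultimately have "(t - D) / K \<le> dist x x0 - c * scale n"
    by linarith
  then have "t - D \<le> K * (dist x x0 - c * scale n)"
    using K_pos by (simp add: pos_divide_le_eq mult.commute)
  moreover have "t - D \<le> K * (radius n - dist s x)"
    using s K_pos by (simp add: field_simps)
  ultimately have "t - D \<le> bump n U x"
    using bump_ge[OF U(1)] \<open>y \<notin> U\<close> by blast
  then show ?thesis
    using coord_s' bump_eq_0_outside[OF \<open>y \<notin> U\<close>] by (intro exI[of _ "(n, s')"]) (simp add: t_def)
qed

lemma coord_separates:
  assumes "D < dist x y"
  shows "\<exists>j. dist x y - D \<le> \<bar>coord x j - coord y j\<bar>"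
proof (cases "dist x y \<le> 2 * dist x x0")
  case True
  then obtain j where "dist x y - D \<le> coord x j - coord y j"
    using coord_separates_from_far_point[OF assms] by blast
  then show ?thesis by (intro exI[of _ j]) linarith
next
  case False
  then have "dist y x \<le> 2 * dist y x0"
    using dist_triangle[of x y x0] by (simp add: dist_commute)
  then obtain j where "dist y x - D \<le> coord y j - coord x j"
    using coord_separates_from_far_point assms by (metis dist_commute)
  then show ?thesis by (intro exI[of _ j]) (simp add: dist_commute)
qed

end

lemma c0plus_embedding_exists_infinite:
  fixes C D M K :: real and S :: "'a::metric_space set"
  assumes dense: "closure S = UNIV" and infinite: "infinite S"
    and card: "ordIso2 (card_of S) (card_of (UNIV :: 'i set))"
    and Delta: "\<forall>R\<ge>0. Delta_c (UNIV :: 'a set) R \<le> ennreal (C * R + D)"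
    and "1 \<le> C" "C < M" "2 * M < K" "0 \<le> D"
  shows "\<exists>f :: 'a \<Rightarrow> 'i \<Rightarrow> real. c0plus_embedding K D f"
proof -
  define q where "q = (1 + K / (2 * M)) / 2"
  define c where "c = M * (1/2 - 1/K)"
  have "0 < M" using assms by linarith
  have "1 < q" "2 * q * M < K"
    using assms by (simp_all add: q_def field_simps)
  have "0 < c"
    using assms by (simp add: c_def field_simps)
  have "\<exists>\<U>. point_finite_cover (UNIV :: 'a set) \<U> \<and>
      ennreal (q powr of_int n) \<le> lebesgue_number UNIV \<U> \<and>
      cover_diam \<U> < ennreal (M * q powr of_int n + D)" for n :: int
    by (rule point_finite_cover_with_small_diam[OF Delta]) (use assms \<open>1 < q\<close> in auto)
  then obtain Cov :: "int \<Rightarrow> 'a set set" where Cov: "\<And>n. point_finite_cover UNIV (Cov n)"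
    "\<And>n. ennreal (q powr of_int n) \<le> lebesgue_number UNIV (Cov n)"
    "\<And>n. cover_diam (Cov n) < ennreal (M * q powr of_int n + D)"
    by metis
  interpret multiscale_covers S Cov q M D K c undefined
    by unfold_locales
      (fact dense \<open>1 < q\<close> \<open>0 < M\<close> \<open>0 \<le> D\<close> \<open>2 * q * M < K\<close>
        \<open>0 < c\<close> c_def[THEN eq_refl] Cov)+
  obtain e :: "int \<times> 'a \<Rightarrow> 'i" where e: "inj_on e (UNIV \<times> S)" "e ` (UNIV \<times> S) \<subseteq> UNIV"
    by (rule inj_int_times_into[OF infinite card])
  show ?thesis
    by (rule c0plus_embedding_of_coordinates[OF e(1)])
      (fact coord_support coord_nonneg coord_lipschitz coord_finite coord_separates)+
qed

lemma c0plus_embedding_exists: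
  fixes C D M K :: real
  assumes dens: "has_density_card (UNIV :: 'a::metric_space set) (UNIV :: 'i set)"
    and Delta: "\<forall>R\<ge>0. Delta_c (UNIV :: 'a set) R \<le> ennreal (C * R + D)"
    and "1 \<le> C" "C < M" "2 * M < K" "0 \<le> D"
  shows "\<exists>f :: 'a \<Rightarrow> 'i \<Rightarrow> real. c0plus_embedding K D f"
proof -
  obtain S :: "'a set" where "closure S = UNIV"
    and S: "ordIso2 (card_of S) (card_of (UNIV :: 'i set))"
    using dens unfolding has_density_card_def by blast
  show ?thesis
  proof (cases "finite S")
    case True
    with \<open>closure S = UNIV\<close> have "S = UNIV"
      by (simp add: closure_closed finite_imp_closed)
    obtain h where "bij_betw h S (UNIV :: 'i set)"
      using S card_of_ordIso by blast
    then have "bij (inv_into S h)"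
      using \<open>S = UNIV\<close> bij_betw_inv_into by blast
    with True \<open>S = UNIV\<close> have "c0plus_embedding 1 0 (\<lambda>x i. dist x (inv_into S h i))"
      by (intro c0plus_embedding_finite_space) (auto simp: bij_is_surj bij_betw_finite)
    moreover have "1 \<le> K" using assms by linarith
    ultimately show ?thesis
      using c0plus_embedding_mono \<open>0 \<le> D\<close> by blast
  next
    case False
    then show ?thesis
      using c0plus_embedding_exists_infinite[OF \<open>closure S = UNIV\<close> _ S Delta] assms by blast
  qed
qed

lemma coarse_c0plus_embedding_exists:
  fixes C D lam K L :: real
  assumes dens: "has_density_card (UNIV :: 'a::metric_space set) (UNIV :: 'i set)"
    and Delta: "\<forall>R\<ge>0. Delta_c (UNIV :: 'a set) R \<le> ennreal (C * R + D)"
    and C: "1 \<le> C" and D: "0 \<le> D" and lam: "0 < lam" and K: "2 * (C + lam) < K"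
    and L: "D \<le> L"
  shows "\<exists>f :: 'a \<Rightarrow> 'i \<Rightarrow> real.
      (\<forall>x. f x \<in> c0plus) \<and> coarse_lipschitz_embedding f sup_dist \<and>
      (\<forall>x y. dist x y - L \<le> sup_dist (f x) (f y) \<and> sup_dist (f x) (f y) \<le> K * dist x y)"
proof -
  have "1 \<le> K" using C lam K by (simp add: algebra_simps)
  obtain f :: "'a \<Rightarrow> 'i \<Rightarrow> real" where "c0plus_embedding K D f"
    using c0plus_embedding_exists[OF dens Delta C _ K D] lam by auto
  then have f: "c0plus_embedding K L f"
    using L by (rule c0plus_embedding_mono[OF _ order_refl])
  moreover have "coarse_lipschitz_embedding f sup_dist"
    using f \<open>1 \<le> K\<close> D L unfolding c0plus_embedding_def
    by (intro coarse_lipschitz_embeddingI[of K L]) auto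
  ultimately show ?thesis
    unfolding c0plus_embedding_def by blast
qed

theorem mainTheorem1:
  fixes C D :: real
  assumes dens: "has_density_card (UNIV :: 'a::metric_space set) (UNIV :: 'i set)"
    and C: "C \<ge> 1" and D: "D \<ge> 0"
    and Delta: "\<forall>R\<ge>0. Delta_c (UNIV :: 'a set) R \<le> ennreal (C * R + D)"
  shows "(\<forall>lam K L. lam > 0 \<and> K > 2 * (C + lam) \<and> L > (C + lam) * D / lam \<longrightarrow>
            (\<exists>f :: 'a \<Rightarrow> ('i \<Rightarrow> real).
               (\<forall>x. f x \<in> c0plus) \<and> coarse_lipschitz_embedding f sup_dist \<and>
               (\<forall>x y. dist x y - L \<le> sup_dist (f x) (f y) \<and> sup_dist (f x) (f y) \<le> K * dist x y)))
       \<and> (D = 0 \<longrightarrow>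
          (\<forall>lam K. lam > 0 \<and> K > 2 * (C + lam) \<longrightarrow>
            (\<exists>f :: 'a \<Rightarrow> ('i \<Rightarrow> real).
               (\<forall>x. f x \<in> c0plus) \<and> coarse_lipschitz_embedding f sup_dist \<and>
               (\<forall>x y. dist x y \<le> sup_dist (f x) (f y) \<and> sup_dist (f x) (f y) \<le> K * dist x y))))"
proof (intro conjI allI impI; elim conjE)
  fix lam K L :: real
  assume lam: "0 < lam" and K: "2 * (C + lam) < K" and L: "(C + lam) * D / lam < L"
  have "D \<le> (C + lam) * D / lam"
    using C D lam by (simp add: field_simps)
  with L show "\<exists>f :: 'a \<Rightarrow> ('i \<Rightarrow> real).
      (\<forall>x. f x \<in> c0plus) \<and> coarse_lipschitz_embedding f sup_dist \<and>
      (\<forall>x y. dist x y - L \<le> sup_dist (f x) (f y) \<and> sup_dist (f x) (f y) \<le> K * dist x y)"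
    by (intro coarse_c0plus_embedding_exists[OF dens Delta C D lam K]) simp
next
  fix lam K :: real
  assume "D = 0" and lam: "0 < lam" and K: "2 * (C + lam) < K"
  then show "\<exists>f :: 'a \<Rightarrow> ('i \<Rightarrow> real).
      (\<forall>x. f x \<in> c0plus) \<and> coarse_lipschitz_embedding f sup_dist \<and>
      (\<forall>x y. dist x y \<le> sup_dist (f x) (f y) \<and> sup_dist (f x) (f y) \<le> K * dist x y)"
    using coarse_c0plus_embedding_exists[OF dens Delta C D lam K, of 0] by simp
qed

end
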